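(* Let $n\ge 1$ and let $x_1,\dots,x_n$ be distinct integers, each greater than $1$, and let $D=\{1,x_1,\dots,x_n\}$. Then $diam(D)=2$ if $n=1$, $diam(D)=3$ if $n=2$, and $diam(D)=4$ if $n>2$.
   Context: A signed tree is a pair $(T,s)$ where $T$ is a finite tree and $s:E(T)\to\{+,-\}$. The signed degree $sdeg(v)$ of a vertex is the number of incident positive edges minus the number of incident negative edges. $(T,s)$ realizes (satisfies) a set $D$ of integers if $D=\{sdeg(v):v\in V(T)\}$. For a set $D$ containing $1$ or $-1$, $diam(D)=\min\{diam(T): \text{some signed tree }(T,s)\text{ realizes }D\}$, where $diam(T)$ is the diameter of the tree $T$. *)

theory Defs
  imports Main
begin

definition simple_graph :: "nat set \<Rightarrow> nat set set \<Rightarrow> bool" where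
  "simple_graph V E \<longleftrightarrow> finite V \<and>
     (\<forall>e\<in>E. \<exists>u v. e = {u, v} \<and> u \<noteq> v \<and> u \<in> V \<and> v \<in> V)"

definition is_walk :: "nat set set \<Rightarrow> nat list \<Rightarrow> bool" where
  "is_walk E xs \<longleftrightarrow> xs \<noteq> [] \<and> (\<forall>i. Suc i < length xs \<longrightarrow> {xs ! i, xs ! Suc i} \<in> E)"

definition connected_graph :: "nat set \<Rightarrow> nat set set \<Rightarrow> bool" where
  "connected_graph V E \<longleftrightarrow>
     (\<forall>u\<in>V. \<forall>v\<in>V. \<exists>xs. is_walk E xs \<and> hd xs = u \<and> last xs = v)"

definition has_cycle :: "nat set set \<Rightarrow> bool" where
  "has_cycle E \<longleftrightarrow> (\<exists>xs. length xs \<ge> 3 \<and> distinct xs \<and> is_walk E xs \<and> {last xs, hd xs} \<in> E)"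

definition is_tree :: "nat set \<Rightarrow> nat set set \<Rightarrow> bool" where
  "is_tree V E \<longleftrightarrow> simple_graph V E \<and> V \<noteq> {} \<and> connected_graph V E \<and> \<not> has_cycle E"

definition gdist :: "nat set set \<Rightarrow> nat \<Rightarrow> nat \<Rightarrow> nat" where
  "gdist E u v = (LEAST k. \<exists>xs. is_walk E xs \<and> hd xs = u \<and> last xs = v \<and> length xs = Suc k)"

definition tree_diam :: "nat set \<Rightarrow> nat set set \<Rightarrow> nat" where
  "tree_diam V E = Max {gdist E u v | u v. u \<in> V \<and> v \<in> V}"

(* signing s: True = positive edge, False = negative edge (only values on E matter) *)
definition sdeg :: "nat set set \<Rightarrow> (nat set \<Rightarrow> bool) \<Rightarrow> nat \<Rightarrow> int" where
  "sdeg E s v = int (card {e\<in>E. v \<in> e \<and> s e}) - int (card {e\<in>E. v \<in> e \<and> \<not> s e})"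

definition realizes :: "nat set \<Rightarrow> nat set set \<Rightarrow> (nat set \<Rightarrow> bool) \<Rightarrow> int set \<Rightarrow> bool" where
  "realizes V E s D \<longleftrightarrow> D = sdeg E s ` V"

definition diamD :: "int set \<Rightarrow> nat" where
  "diamD D = (LEAST d. \<exists>V E s. is_tree V E \<and> realizes V E s D \<and> tree_diam V E = d)"

end

(*
  A vertex of signed degree at least 2 has at least two neighbours. One such vertex is the
  middle of a path with two edges. Two of them are joined by their tree path, which can be
  prolonged at both ends by further neighbours, giving a path with three edges. Among three of
  them two are non-adjacent, since a tree has no triangle, and the same prolongation gives a
  path with four edges. In a tree a path is a shortest walk, so these are lower bounds for the
  diameter.

  The bounds are attained by trees of depth two: a root joined by positive edges to L leaves
  and by negative edges to vertices c_1, ..., c_m, each c_i carrying k_i positive leaves, has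
  signed degrees L - m, k_i - 1 and 1, and diameter at most 2, 3 or 4 according as m = 0,
  m = 1 or m > 1. Take m = 0 and L = x_1 for n = 1; m = 1, L = x_1 + 1 and k_1 = x_2 + 1 for n = 2;
  and m = n, L = n + 1 and k_i = x_i + 1 for n > 2.
*)

theory Submission
  imports Defs "HOL-Library.Nat_Bijection"
begin

fun walk_edges :: "nat list \<Rightarrow> nat set set" where
  "walk_edges (x # y # r) = insert {x, y} (walk_edges (y # r))"
| "walk_edges _ = {}"

lemma is_walk_Cons_Cons: "is_walk E (x # y # r) \<longleftrightarrow> {x, y} \<in> E \<and> is_walk E (y # r)"
  unfolding is_walk_def by (auto simp: less_Suc_eq_0_disj)

lemma is_walk_iff_walk_edges: "is_walk E xs \<longleftrightarrow> xs \<noteq> [] \<and> walk_edges xs \<subseteq> E"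
  by (induction xs rule: walk_edges.induct) (auto simp: is_walk_Cons_Cons, auto simp: is_walk_def)

lemma walk_edges_append_Cons:
  "walk_edges (xs @ y # ys) = walk_edges (xs @ [y]) \<union> walk_edges (y # ys)"
  by (induction xs rule: walk_edges.induct) auto

lemma walk_edges_append_subset: "walk_edges xs \<subseteq> walk_edges (xs @ ys)"
  by (induction xs rule: walk_edges.induct) (auto simp: Cons_eq_append_conv)

lemma walk_edges_append_tl:
  assumes "xs \<noteq> []" "ys \<noteq> []" "last xs = hd ys"
  shows "walk_edges (xs @ tl ys) = walk_edges xs \<union> walk_edges ys"
proof -
  obtain xs' where "xs = xs' @ [hd ys]" using assms by (metis append_butlast_last_id)
  then show ?thesis
    using walk_edges_append_Cons[of xs' "hd ys" "tl ys"] assms(2) by simp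
qed

lemma last_append_tl: "ys \<noteq> [] \<Longrightarrow> last xs = hd ys \<Longrightarrow> last (xs @ tl ys) = last ys"
  by (cases ys) auto

lemma is_walk_append_tl:
  "is_walk E xs \<Longrightarrow> is_walk E ys \<Longrightarrow> last xs = hd ys \<Longrightarrow> is_walk E (xs @ tl ys)"
  by (simp add: is_walk_iff_walk_edges walk_edges_append_tl)

lemma walk_edges_rev: "walk_edges (rev xs) = walk_edges xs"
proof (induction xs rule: walk_edges.induct)
  case (1 x y r)
  have "walk_edges (rev (y # r) @ tl [y, x]) = walk_edges (rev (y # r)) \<union> walk_edges [y, x]"
    by (rule walk_edges_append_tl) (simp_all add: last_rev)
  then show ?case using 1 by (auto simp: insert_commute)
qed auto

lemma is_walk_rev: "is_walk E (rev xs) \<longleftrightarrow> is_walk E xs"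
  by (simp add: is_walk_iff_walk_edges walk_edges_rev)

lemma walk_edges_subset_set: "e \<in> walk_edges xs \<Longrightarrow> e \<subseteq> set xs"
  by (induction xs rule: walk_edges.induct) auto

lemma finite_walk_edges: "finite (walk_edges xs)"
  by (induction xs rule: walk_edges.induct) auto

lemma card_walk_edges_le: "card (walk_edges xs) \<le> length xs - 1"
  by (induction xs rule: walk_edges.induct) (auto simp: card_insert_if finite_walk_edges)

lemma card_walk_edges_distinct: "distinct xs \<Longrightarrow> card (walk_edges xs) = length xs - 1"
proof (induction xs rule: walk_edges.induct)
  case (1 x y r)
  have "{x, y} \<notin> walk_edges (y # r)" using walk_edges_subset_set 1(2) by fastforce
  then show ?case using 1 by (simp add: finite_walk_edges)
qed auto

lemma walk_edges_decomp:
  "e \<in> walk_edges xs \<Longrightarrow> \<exists>A p q B. xs = A @ p # q # B \<and> e = {p, q}"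
proof (induction xs rule: walk_edges.induct)
  case (1 x y r)
  then show ?case by (metis append_Cons append_Nil insertE walk_edges.simps(1))
qed auto

lemma walk_to_path:
  assumes "xs \<noteq> []"
  shows "\<exists>ys. ys \<noteq> [] \<and> distinct ys \<and> hd ys = hd xs \<and> last ys = last xs
           \<and> walk_edges ys \<subseteq> walk_edges xs"
  using assms
proof (induction "length xs" arbitrary: xs rule: less_induct)
  case less
  show ?case
  proof (cases "distinct xs")
    case True
    then show ?thesis using less by blast
  next
    case False
    then obtain a y b c where xs: "xs = a @ [y] @ b @ [y] @ c" using not_distinct_decomp by blast
    let ?xs = "a @ y # c"
    have "walk_edges ?xs \<subseteq> walk_edges xs"
      using walk_edges_append_Cons[of a y "b @ y # c"] walk_edges_append_Cons[of "y # b" y c]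
        walk_edges_append_Cons[of a y c] xs by auto
    moreover have "hd ?xs = hd xs" "last ?xs = last xs" using xs by (cases a; cases c; simp)+
    moreover have "length ?xs < length xs" using xs by simp
    ultimately show ?thesis using less(1)[of ?xs] by fastforce
  qed
qed

lemma path_length_ge_3:
  assumes "ys \<noteq> []" "hd ys \<noteq> last ys" "{hd ys, last ys} \<notin> walk_edges ys"
  shows "3 \<le> length ys"
  using assms by (cases ys; cases "tl ys"; cases "tl (tl ys)") auto

lemma acyclic_walk_uses_edge:
  assumes "\<not> has_cycle E" "{p, q} \<in> E" "p \<noteq> q"
    and "is_walk E ws" "hd ws = p" "last ws = q"
  shows "{p, q} \<in> walk_edges ws"
proof (rule ccontr)
  assume avoid: "{p, q} \<notin> walk_edges ws"
  obtain ys where ys: "ys \<noteq> []" "distinct ys" "hd ys = p" "last ys = q"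
    "walk_edges ys \<subseteq> walk_edges ws"
    using walk_to_path[of ws] assms(4-6) by (auto simp: is_walk_iff_walk_edges)
  have "3 \<le> length ys" using path_length_ge_3[of ys] ys avoid assms(3) by blast
  moreover have "is_walk E ys" using ys assms(4) by (auto simp: is_walk_iff_walk_edges)
  ultimately have "has_cycle E"
    unfolding has_cycle_def using ys assms(2) by (metis insert_commute)
  then show False using assms(1) by blast
qed

text \<open>For an edge \<open>{p, q}\<close> of the path, going back from \<open>p\<close> along the path, then along the
  walk and back to \<open>q\<close> along the path gives a \<open>p\<close>--\<open>q\<close> walk, which must use \<open>{p, q}\<close>.\<close>
lemma acyclic_path_edges_subset:
  assumes acyclic: "\<not> has_cycle E" and P: "distinct P" "is_walk E P"
    and W: "is_walk E W" "hd W = hd P" "last W = last P"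
  shows "walk_edges P \<subseteq> walk_edges W"
proof
  fix e assume "e \<in> walk_edges P"
  then obtain A p q B where P_split: "P = A @ p # q # B" and e: "e = {p, q}"
    using walk_edges_decomp by blast
  let ?front = "A @ [p]" and ?back = "q # B"
  have front_back: "walk_edges P = walk_edges ?front \<union> walk_edges (p # ?back)"
    unfolding P_split by (rule walk_edges_append_Cons)
  have "p \<noteq> q" "q \<notin> set ?front" "p \<notin> set ?back" using P(1) P_split by auto
  then have pq_off: "{p, q} \<notin> walk_edges ?front" "{p, q} \<notin> walk_edges ?back"
    using walk_edges_subset_set by blast+
  define C where "C = (rev ?front @ tl W) @ tl (rev ?back)"
  have walks: "is_walk E (rev ?front)" "is_walk E (rev ?back)" "{p, q} \<in> E"
    unfolding is_walk_rev using P(2) front_back by (auto simp: is_walk_iff_walk_edges)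
  have W_ne: "W \<noteq> []" using W(1) by (simp add: is_walk_def)
  have ends: "last (rev ?front) = hd W" "last (rev ?front @ tl W) = hd (rev ?back)"
    using W P_split last_append_tl[OF W_ne, of "rev ?front"] by (simp_all add: last_rev hd_rev)
  have "is_walk E C" unfolding C_def by (intro is_walk_append_tl walks W(1) ends)
  moreover have "hd C = p" "last C = q"
    unfolding C_def by (simp, subst last_append_tl[OF _ ends(2)]) auto
  ultimately have "{p, q} \<in> walk_edges C"
    using acyclic_walk_uses_edge[OF acyclic] walks \<open>p \<noteq> q\<close> by blast
  moreover have "walk_edges C = walk_edges ?front \<union> walk_edges W \<union> walk_edges ?back"
  proof -
    have "walk_edges C = walk_edges (rev ?front @ tl W) \<union> walk_edges (rev ?back)"
      unfolding C_def by (rule walk_edges_append_tl[OF _ _ ends(2)]) simp_all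
    also have "walk_edges (rev ?front @ tl W) = walk_edges (rev ?front) \<union> walk_edges W"
      by (rule walk_edges_append_tl[OF _ W_ne ends(1)]) simp
    finally show ?thesis by (simp only: walk_edges_rev)
  qed
  ultimately show "e \<in> walk_edges W" using pq_off e by blast
qed

lemma gdist_attained:
  assumes "is_walk E xs" "hd xs = u" "last xs = v"
  shows "\<exists>W. is_walk E W \<and> hd W = u \<and> last W = v \<and> length W = Suc (gdist E u v)"
proof -
  have "\<exists>W. is_walk E W \<and> hd W = u \<and> last W = v \<and> length W = Suc (length xs - 1)"
    using assms by (auto simp: is_walk_def)
  then show ?thesis unfolding gdist_def by (rule LeastI)
qed

lemma gdist_le_walk:
  assumes "is_walk E xs" "hd xs = u" "last xs = v"
  shows "gdist E u v \<le> length xs - 1"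
  unfolding gdist_def by (rule Least_le) (use assms in \<open>auto simp: is_walk_def\<close>)

lemma acyclic_path_length_le_gdist:
  assumes "\<not> has_cycle E" "distinct P" "is_walk E P"
  shows "length P - 1 \<le> gdist E (hd P) (last P)"
proof -
  obtain W where W: "is_walk E W" "hd W = hd P" "last W = last P"
    "length W = Suc (gdist E (hd P) (last P))"
    using gdist_attained assms(3) by blast
  have "length P - 1 = card (walk_edges P)" using card_walk_edges_distinct assms(2) by simp
  also have "\<dots> \<le> card (walk_edges W)"
    using acyclic_path_edges_subset[OF assms W(1-3)] by (simp add: card_mono finite_walk_edges)
  also have "\<dots> \<le> length W - 1" by (rule card_walk_edges_le)
  finally show ?thesis using W(4) by simp
qed

lemma gdist_le_tree_diam:
  assumes "finite V" "u \<in> V" "v \<in> V"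
  shows "gdist E u v \<le> tree_diam V E"
proof -
  have "{gdist E u v | u v. u \<in> V \<and> v \<in> V} = (\<lambda>(u, v). gdist E u v) ` (V \<times> V)" by auto
  then show ?thesis unfolding tree_diam_def using assms by (intro Max_ge) auto
qed

lemma tree_diam_le:
  assumes "finite V" "V \<noteq> {}" "\<And>u v. u \<in> V \<Longrightarrow> v \<in> V \<Longrightarrow> gdist E u v \<le> d"
  shows "tree_diam V E \<le> d"
proof -
  have "{gdist E u v | u v. u \<in> V \<and> v \<in> V} = (\<lambda>(u, v). gdist E u v) ` (V \<times> V)" by auto
  then show ?thesis unfolding tree_diam_def using assms by (intro Max.boundedI) auto
qed

lemma tree_path_length_le_tree_diam:
  assumes "is_tree V E" "distinct P" "is_walk E P" "hd P \<in> V" "last P \<in> V"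
  shows "length P - 1 \<le> tree_diam V E"
  using acyclic_path_length_le_gdist[of E P] gdist_le_tree_diam[of V "hd P" "last P" E] assms
  unfolding is_tree_def simple_graph_def by linarith

definition has_two_neighbours :: "nat set set \<Rightarrow> nat \<Rightarrow> bool" where
  "has_two_neighbours E w \<longleftrightarrow> (\<exists>a b. a \<noteq> b \<and> {w, a} \<in> E \<and> {w, b} \<in> E)"

lemma simple_graph_edge:
  assumes "simple_graph V E" "{u, v} \<in> E"
  shows "u \<noteq> v" "u \<in> V" "v \<in> V"
  using assms unfolding simple_graph_def by (metis doubleton_eq_iff)+

lemma sdeg_ge_2_has_two_neighbours:
  assumes "simple_graph V E" "2 \<le> sdeg E s w"
  shows "has_two_neighbours E w"
proof -
  have "2 \<le> card {e \<in> E. w \<in> e \<and> s e}" using assms(2) unfolding sdeg_def by linarith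
  then obtain B where B: "B \<subseteq> {e \<in> E. w \<in> e \<and> s e}" "card B = 2"
    by (meson obtain_subset_with_card_n)
  then obtain e1 e2 where "B = {e1, e2}" "e1 \<noteq> e2" by (auto simp: card_2_iff)
  then have e: "e1 \<in> E" "e2 \<in> E" "w \<in> e1" "w \<in> e2" "e1 \<noteq> e2" using B(1) by auto
  have "\<exists>a. e = {w, a}" if "e \<in> E" "w \<in> e" for e
    using assms(1) that unfolding simple_graph_def by (fastforce simp: insert_commute)
  then obtain a b where "e1 = {w, a}" "e2 = {w, b}" using e by meson
  then show ?thesis unfolding has_two_neighbours_def using e by blast
qed

lemma acyclic_neighbour_not_on_path:
  assumes "\<not> has_cycle E" "distinct P" "is_walk E P" "2 \<le> length P"
    and "{a, hd P} \<in> E" "a \<noteq> hd P" "a \<noteq> P ! 1"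
  shows "a \<notin> set P"
proof
  assume "a \<in> set P"
  then obtain j where j: "j < length P" "P ! j = a" by (metis in_set_conv_nth)
  have "j \<noteq> 0" using assms(4,6) j by (metis hd_conv_nth list.size(3) not_numeral_le_zero)
  moreover have "j \<noteq> 1" using assms(7) j by auto
  ultimately have "2 \<le> j" by linarith
  let ?C = "take (Suc j) P"
  have "is_walk E ?C" using assms(3) j walk_edges_append_subset[of ?C "drop (Suc j) P"]
    by (auto simp: is_walk_iff_walk_edges)
  moreover have "last ?C = a" using j by (simp add: take_Suc_conv_app_nth)
  moreover have "hd ?C = hd P" by (simp add: hd_take)
  ultimately have "has_cycle E"
    unfolding has_cycle_def using assms(2,5) j \<open>2 \<le> j\<close>
    by (intro exI[of _ ?C]) auto
  then show False using assms(1) by blast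
qed

lemma tree_path_between:
  assumes "is_tree V E" "u \<in> V" "v \<in> V" "u \<noteq> v"
  obtains P where "distinct P" "is_walk E P" "hd P = u" "last P = v" "2 \<le> length P"
    "{u, v} \<notin> E \<Longrightarrow> 3 \<le> length P"
proof -
  obtain W where "is_walk E W" "hd W = u" "last W = v"
    using assms unfolding is_tree_def connected_graph_def by blast
  then obtain P where P: "P \<noteq> []" "distinct P" "hd P = u" "last P = v" "walk_edges P \<subseteq> E"
    using walk_to_path[of W] by (auto simp: is_walk_iff_walk_edges)
  have "2 \<le> length P" using P assms(4) by (cases P; cases "tl P") auto
  moreover have "3 \<le> length P" if "{u, v} \<notin> E"
    using path_length_ge_3[of P] P that assms(4) by blast
  ultimately show ?thesis using that P by (simp add: is_walk_iff_walk_edges)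
qed

lemma has_two_neighbours_tree_diam:
  assumes "is_tree V E" "has_two_neighbours E w"
  shows "2 \<le> tree_diam V E"
proof -
  obtain a b where ab: "a \<noteq> b" "{w, a} \<in> E" "{w, b} \<in> E"
    using assms(2) unfolding has_two_neighbours_def by blast
  have sg: "simple_graph V E" using assms(1) unfolding is_tree_def by blast
  have "length [a, w, b] - 1 \<le> tree_diam V E"
    using ab simple_graph_edge[OF sg ab(2)] simple_graph_edge[OF sg ab(3)]
    by (intro tree_path_length_le_tree_diam[OF assms(1)])
      (auto simp: is_walk_iff_walk_edges insert_commute)
  then show ?thesis by simp
qed

lemma has_two_neighbours_avoiding:
  assumes "has_two_neighbours E w"
  obtains a where "{a, w} \<in> E" "a \<noteq> c"
proof -
  obtain a b where "a \<noteq> b" "{w, a} \<in> E" "{w, b} \<in> E"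
    using assms unfolding has_two_neighbours_def by blast
  then show ?thesis using that by (cases "a = c") (auto simp: insert_commute)
qed

text \<open>The extra neighbours at the two ends lie off the path and differ from each other, since
  otherwise they would close a cycle.\<close>
lemma extended_path_length_le_tree_diam:
  assumes T: "is_tree V E" and P: "distinct P" "is_walk E P" "2 \<le> length P"
    and two: "has_two_neighbours E (hd P)" "has_two_neighbours E (last P)"
  shows "length P + 1 \<le> tree_diam V E"
proof -
  have sg: "simple_graph V E" and acyclic: "\<not> has_cycle E"
    using T unfolding is_tree_def by blast+
  obtain a where a: "{a, hd P} \<in> E" "a \<noteq> P ! 1"
    using has_two_neighbours_avoiding[OF two(1)] by blast
  obtain b where b: "{b, last P} \<in> E" "b \<noteq> rev P ! 1"
    using has_two_neighbours_avoiding[OF two(2)] by blast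
  have a_off: "a \<notin> set P"
    using acyclic_neighbour_not_on_path[OF acyclic P a(1) _ a(2)] simple_graph_edge[OF sg a(1)]
    by blast
  have "b \<notin> set (rev P)"
    using acyclic_neighbour_not_on_path[of E "rev P" b] acyclic P b simple_graph_edge[OF sg b(1)]
    by (simp add: is_walk_rev hd_rev)
  then have b_off: "b \<notin> set P" by simp
  obtain p r where P_eq: "P = p # r" using P(3) by (cases P) auto
  have walk_aP: "is_walk E (a # P)" using P(2) a(1) P_eq by (simp add: is_walk_Cons_Cons)
  have "a \<noteq> b"
  proof
    assume "a = b"
    then have "has_cycle E"
      unfolding has_cycle_def using walk_aP P a_off b(1)
      by (intro exI[of _ "a # P"]) (auto simp: insert_commute)
    then show False using acyclic by blast
  qed
  let ?Q = "(a # P) @ tl [last P, b]"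
  have "is_walk E ?Q"
    using walk_aP b(1) P_eq by (intro is_walk_append_tl) (auto simp: is_walk_def insert_commute)
  moreover have "distinct ?Q" using P(1) a_off b_off \<open>a \<noteq> b\<close> by simp
  ultimately have "length ?Q - 1 \<le> tree_diam V E"
    using simple_graph_edge[OF sg a(1)] simple_graph_edge[OF sg b(1)]
    by (intro tree_path_length_le_tree_diam[OF T]) auto
  then show ?thesis by simp
qed

lemma has_two_neighbours_pair_tree_diam:
  assumes T: "is_tree V E" and uv: "u \<in> V" "v \<in> V" "u \<noteq> v"
    and two: "has_two_neighbours E u" "has_two_neighbours E v"
  shows "(if {u, v} \<in> E then 3 else 4) \<le> tree_diam V E"
proof -
  obtain P where P: "distinct P" "is_walk E P" "hd P = u" "last P = v" "2 \<le> length P"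
    "{u, v} \<notin> E \<Longrightarrow> 3 \<le> length P"
    using tree_path_between[OF T uv] by blast
  then show ?thesis
    using extended_path_length_le_tree_diam[OF T P(1,2,5)] two by auto
qed

lemma has_two_neighbours_triple_tree_diam:
  assumes T: "is_tree V E" and V: "u \<in> V" "v \<in> V" "w \<in> V"
    and distinct: "u \<noteq> v" "u \<noteq> w" "v \<noteq> w"
    and two: "has_two_neighbours E u" "has_two_neighbours E v" "has_two_neighbours E w"
  shows "4 \<le> tree_diam V E"
proof -
  have "\<not> has_cycle E" using T unfolding is_tree_def by blast
  then have "\<not> ({u, v} \<in> E \<and> {v, w} \<in> E \<and> {w, u} \<in> E)"
    unfolding has_cycle_def using distinct
    by (auto simp: is_walk_iff_walk_edges dest!: spec[of _ "[u, v, w]"])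
  then consider "{u, v} \<notin> E" | "{v, w} \<notin> E" | "{w, u} \<notin> E" by blast
  then show ?thesis
    using has_two_neighbours_pair_tree_diam[OF T] V distinct two by cases fastforce+
qed

lemma cycle_edge_mod:
  assumes "is_walk E xs" "{last xs, hd xs} \<in> E" "i < length xs"
  shows "{xs ! i, xs ! (Suc i mod length xs)} \<in> E"
proof (cases "Suc i < length xs")
  case True
  then show ?thesis using assms(1) unfolding is_walk_def by simp
next
  case False
  then have "i = length xs - 1" "xs \<noteq> []" using assms(3) by auto
  then show ?thesis using assms(2) by (simp add: hd_conv_nth last_conv_nth insert_commute)
qed

lemma cycle_two_neighbours:
  assumes "3 \<le> length xs" "distinct xs" "is_walk E xs" "{last xs, hd xs} \<in> E" "i < length xs"
  shows "\<exists>p q. p \<noteq> q \<and> p \<in> set xs \<and> q \<in> set xs \<and> {xs ! i, p} \<in> E \<and> {xs ! i, q} \<in> E"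
proof -
  define L where "L = length xs"
  define j where "j = (if i = 0 then L - 1 else i - 1)"
  have L: "3 \<le> L" "i < L" using assms unfolding L_def by auto
  then have "Suc i mod L < L" by simp
  have j: "j < L" "Suc j mod L = i" using L unfolding j_def by auto
  have "Suc i mod L \<noteq> j" using L unfolding j_def by (cases "Suc i = L") auto
  then have "xs ! (Suc i mod L) \<noteq> xs ! j"
    using assms(2) L j \<open>Suc i mod L < L\<close> unfolding L_def by (simp add: nth_eq_iff_index_eq)
  moreover have "{xs ! i, xs ! (Suc i mod L)} \<in> E" "{xs ! j, xs ! i} \<in> E"
    using cycle_edge_mod[OF assms(3,4)] L j unfolding L_def by auto
  moreover have "xs ! (Suc i mod L) \<in> set xs" "xs ! j \<in> set xs"
    using \<open>Suc i mod L < L\<close> j(1) unfolding L_def by simp_all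
  ultimately show ?thesis by (metis insert_commute)
qed

locale parent_tree =
  fixes V :: "nat set" and root :: nat and par :: "nat \<Rightarrow> nat" and depth :: "nat \<Rightarrow> nat"
  assumes finite_V: "finite V" and root_in_V: "root \<in> V"
    and par_in_V: "\<And>u. u \<in> V \<Longrightarrow> u \<noteq> root \<Longrightarrow> par u \<in> V"
    and depth_par_less: "\<And>u. u \<in> V \<Longrightarrow> u \<noteq> root \<Longrightarrow> depth (par u) < depth u"
begin

definition edges :: "nat set set" where
  "edges = (\<lambda>u. {u, par u}) ` (V - {root})"

lemma parent_edge: "u \<in> V \<Longrightarrow> u \<noteq> root \<Longrightarrow> {u, par u} \<in> edges"
  unfolding edges_def by blast

lemma simple_graph: "simple_graph V edges"
  unfolding simple_graph_def edges_def using finite_V par_in_V depth_par_less by fastforce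

lemma edge_cases:
  assumes "{a, b} \<in> edges"
  shows "b = par a \<or> (a = par b \<and> depth a < depth b)"
  using assms depth_par_less unfolding edges_def by (auto simp: doubleton_eq_iff)

text \<open>A vertex of maximal depth on a cycle would have two distinct cycle neighbours, each of
  which must be its parent.\<close>
lemma acyclic: "\<not> has_cycle edges"
proof
  assume "has_cycle edges"
  then obtain xs where cycle: "3 \<le> length xs" "distinct xs" "is_walk edges xs"
    "{last xs, hd xs} \<in> edges"
    unfolding has_cycle_def by blast
  then have "Max (depth ` set xs) \<in> depth ` set xs" by (intro Max_in) auto
  then obtain m where m: "m \<in> set xs" "depth m = Max (depth ` set xs)" by force
  have m_max: "depth y \<le> depth m" if "y \<in> set xs" for y
    unfolding m(2) using that by simp
  obtain i where "i < length xs" "xs ! i = m" using m(1) by (metis in_set_conv_nth)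
  then obtain p q where "p \<noteq> q" "{m, p} \<in> edges" "{m, q} \<in> edges" "p \<in> set xs" "q \<in> set xs"
    using cycle_two_neighbours[OF cycle] by blast
  moreover have "w = par m" if "{m, w} \<in> edges" "w \<in> set xs" for w
    using edge_cases[OF that(1)] m_max[OF that(2)] by linarith
  ultimately show False by metis
qed

lemma walk_to_root:
  assumes "u \<in> V"
  shows "\<exists>xs. is_walk edges xs \<and> hd xs = u \<and> last xs = root \<and> length xs \<le> Suc (depth u)"
  using assms
proof (induction "depth u" arbitrary: u rule: less_induct)
  case less
  show ?case
  proof (cases "u = root")
    case True
    then show ?thesis by (intro exI[of _ "[root]"]) (simp add: is_walk_def)
  next
    case False
    then obtain xs where xs: "is_walk edges xs" "hd xs = par u" "last xs = root"
      "length xs \<le> Suc (depth (par u))"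
      using less depth_par_less par_in_V by blast
    then obtain ys where "xs = par u # ys" by (cases xs) (auto simp: is_walk_def)
    then show ?thesis
      using xs parent_edge[OF less(2) False] depth_par_less[OF less(2) False]
      by (intro exI[of _ "u # xs"]) (auto simp: is_walk_Cons_Cons)
  qed
qed

lemma walk_through_root:
  assumes "u \<in> V" "v \<in> V"
  shows "\<exists>xs. is_walk edges xs \<and> hd xs = u \<and> last xs = v \<and> length xs \<le> Suc (depth u + depth v)"
proof -
  obtain xs ys where xs: "is_walk edges xs" "hd xs = u" "last xs = root" "length xs \<le> Suc (depth u)"
    and ys: "is_walk edges ys" "hd ys = v" "last ys = root" "length ys \<le> Suc (depth v)"
    using walk_to_root assms by meson
  have ne: "xs \<noteq> []" "rev ys \<noteq> []" using xs ys by (auto simp: is_walk_def)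
  have "is_walk edges (xs @ tl (rev ys))"
    using xs ys by (intro is_walk_append_tl) (simp_all add: is_walk_rev hd_rev)
  moreover have "last (xs @ tl (rev ys)) = v"
    using last_append_tl[OF ne(2)] xs ys by (simp add: hd_rev last_rev)
  ultimately show ?thesis using xs ys ne by (intro exI[of _ "xs @ tl (rev ys)"]) auto
qed

lemma is_tree: "is_tree V edges"
  unfolding is_tree_def connected_graph_def
  using simple_graph acyclic root_in_V walk_through_root by blast

lemma gdist_le_depth:
  assumes "u \<in> V" "v \<in> V"
  shows "gdist edges u v \<le> depth u + depth v"
proof -
  obtain xs where "is_walk edges xs" "hd xs = u" "last xs = v" "length xs \<le> Suc (depth u + depth v)"
    using walk_through_root[OF assms] by blast
  then show ?thesis using gdist_le_walk[of edges xs u v] by linarith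
qed

lemma sdeg_eq_sum:
  "sdeg edges s v = (\<Sum>u | u \<in> V - {root} \<and> (u = v \<or> par u = v). if s {u, par u} then 1 else -1)"
proof -
  define A where "A = {u. u \<in> V - {root} \<and> (u = v \<or> par u = v)}"
  define g where "g u = {u, par u}" for u
  have "inj_on g (V - {root})"
  proof (rule inj_onI)
    fix u w assume uw: "u \<in> V - {root}" "w \<in> V - {root}" "g u = g w"
    show "u = w"
    proof (rule ccontr)
      assume "u \<noteq> w"
      then have "u = par w" "w = par u" using uw(3) unfolding g_def by (auto simp: doubleton_eq_iff)
      moreover have "depth (par u) < depth u" "depth (par w) < depth w"
        using depth_par_less uw(1,2) by auto
      ultimately show False by simp
    qed
  qed
  then have inj: "inj_on g A" unfolding A_def by (rule inj_on_subset) auto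
  have finite_A: "finite A" unfolding A_def using finite_V by simp
  have "{e \<in> edges. v \<in> e \<and> s e} = g ` {u \<in> A. s (g u)}"
    "{e \<in> edges. v \<in> e \<and> \<not> s e} = g ` {u \<in> A. \<not> s (g u)}"
    unfolding A_def g_def edges_def by auto
  moreover have "card (g ` {u \<in> A. P u}) = card {u \<in> A. P u}" for P
    by (rule card_image, rule inj_on_subset[OF inj]) auto
  ultimately have "sdeg edges s v = int (card {u \<in> A. s (g u)}) - int (card {u \<in> A. \<not> s (g u)})"
    unfolding sdeg_def by simp
  also have "\<dots> = (\<Sum>u\<in>A. if s (g u) then 1 else -1)"
    using sum.If_cases[OF finite_A, of "\<lambda>u. s (g u)" "\<lambda>_. (1::int)" "\<lambda>_. -1"]
    by (simp add: Collect_conj_eq Int_commute Collect_neg_eq)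
  finally show ?thesis unfolding A_def g_def .
qed

end

text \<open>The trees of depth two live on pairs, encoded as naturals by \<open>prod_encode\<close>:
  \<open>(0, 0)\<close> is the root, \<open>(0, j)\<close> with \<open>1 \<le> j \<le> L\<close> are leaves at the root, \<open>(i, 0)\<close> with
  \<open>1 \<le> i \<le> n\<close> are the inner children of the root, and \<open>(i, j)\<close> with \<open>1 \<le> j \<le> k i\<close> are the
  leaves below \<open>(i, 0)\<close>.\<close>

definition pair_parent :: "nat \<times> nat \<Rightarrow> nat \<times> nat" where
  "pair_parent p = (if snd p = 0 then (0, 0) else (fst p, 0))"

definition pair_depth :: "nat \<times> nat \<Rightarrow> nat" where
  "pair_depth p = (if fst p = 0 then 0 else 1) + (if snd p = 0 then 0 else 1)"

definition code_parent :: "nat \<Rightarrow> nat" where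
  "code_parent u = prod_encode (pair_parent (prod_decode u))"

definition code_depth :: "nat \<Rightarrow> nat" where
  "code_depth u = pair_depth (prod_decode u)"

definition two_level_pairs :: "nat \<Rightarrow> nat \<Rightarrow> (nat \<Rightarrow> nat) \<Rightarrow> (nat \<times> nat) set" where
  "two_level_pairs L n k = {0} \<times> {0..L} \<union> Sigma {1..n} (\<lambda>i. {0..k i})"

interpretation two_level: parent_tree "prod_encode ` two_level_pairs L n k" "prod_encode (0, 0)"
  code_parent code_depth for L n k
proof
  show "finite (prod_encode ` two_level_pairs L n k)" unfolding two_level_pairs_def by simp
  show "prod_encode (0, 0) \<in> prod_encode ` two_level_pairs L n k"
    unfolding two_level_pairs_def by simp
  fix u assume "u \<in> prod_encode ` two_level_pairs L n k" "u \<noteq> prod_encode (0, 0)"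
  then obtain p where "p \<in> two_level_pairs L n k" "u = prod_encode p" "p \<noteq> (0, 0)" by auto
  then show "code_parent u \<in> prod_encode ` two_level_pairs L n k"
    "code_depth (code_parent u) < code_depth u"
    unfolding two_level_pairs_def code_parent_def code_depth_def pair_parent_def pair_depth_def
    by (cases p; auto)+
qed

definition two_level_sign :: "nat set \<Rightarrow> bool" where
  "two_level_sign e \<longleftrightarrow> (\<forall>i. e \<noteq> {prod_encode (0, 0), prod_encode (i, 0)})"

lemma two_level_sign_parent_edge:
  assumes "p \<noteq> (0, 0)"
  shows "two_level_sign {prod_encode p, code_parent (prod_encode p)} \<longleftrightarrow> snd p \<noteq> 0"
  using assms unfolding two_level_sign_def code_parent_def pair_parent_def
  by (cases p) (auto simp: doubleton_eq_iff)

lemma sdeg_two_level: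
  "sdeg (two_level.edges L n k) two_level_sign (prod_encode q) =
    (\<Sum>p | p \<in> two_level_pairs L n k - {(0, 0)} \<and> (p = q \<or> pair_parent p = q).
      if snd p = 0 then -1 else 1)"
proof -
  let ?N = "{p. p \<in> two_level_pairs L n k - {(0, 0)} \<and> (p = q \<or> pair_parent p = q)}"
  have "{u. u \<in> prod_encode ` two_level_pairs L n k - {prod_encode (0, 0)}
          \<and> (u = prod_encode q \<or> code_parent u = prod_encode q)} = prod_encode ` ?N"
    unfolding code_parent_def by auto
  then have "sdeg (two_level.edges L n k) two_level_sign (prod_encode q) =
      (\<Sum>u\<in>prod_encode ` ?N. if two_level_sign {u, code_parent u} then 1 else -1)"
    by (simp add: two_level.sdeg_eq_sum)
  also have "\<dots> = (\<Sum>p\<in>?N.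
      if two_level_sign {prod_encode p, code_parent (prod_encode p)} then 1 else -1)"
    by (rule sum.reindex_cong[OF inj_on_subset[OF inj_prod_encode]]) auto
  also have "\<dots> = (\<Sum>p\<in>?N. if snd p = 0 then -1 else 1)"
    by (rule sum.cong) (auto simp: two_level_sign_parent_edge)
  finally show ?thesis .
qed

lemma sdeg_two_level_root:
  "sdeg (two_level.edges L n k) two_level_sign (prod_encode (0, 0)) = int L - int n"
proof -
  have "{p. p \<in> two_level_pairs L n k - {(0, 0)} \<and> (p = (0, 0) \<or> pair_parent p = (0, 0))}
      = {0} \<times> {1..L} \<union> {1..n} \<times> {0}"
    unfolding two_level_pairs_def pair_parent_def by auto
  then have "sdeg (two_level.edges L n k) two_level_sign (prod_encode (0, 0))
      = (\<Sum>p\<in>{0} \<times> {1..L} \<union> {1..n} \<times> {0}. if snd p = 0 then -1 else 1)"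
    by (simp only: sdeg_two_level)
  also have "\<dots> = (\<Sum>p\<in>{0::nat} \<times> {1..L}. if snd p = 0 then -1 else 1)
      + (\<Sum>p\<in>{1..n} \<times> {0::nat}. if snd p = 0 then -1 else 1)"
    by (rule sum.union_disjoint) auto
  also have "\<dots> = (\<Sum>p\<in>{0::nat} \<times> {1..L}. 1) + (\<Sum>p\<in>{1..n} \<times> {0::nat}. -1)"
    by (intro arg_cong2[where f = "(+)"] sum.cong) auto
  finally show ?thesis by (simp add: card_cartesian_product)
qed

lemma sdeg_two_level_inner:
  assumes "i \<in> {1..n}"
  shows "sdeg (two_level.edges L n k) two_level_sign (prod_encode (i, 0)) = int (k i) - 1"
proof -
  have "{p. p \<in> two_level_pairs L n k - {(0, 0)} \<and> (p = (i, 0) \<or> pair_parent p = (i, 0))}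
      = insert (i, 0) ({i} \<times> {1..k i})"
    using assms unfolding two_level_pairs_def pair_parent_def by auto
  then have "sdeg (two_level.edges L n k) two_level_sign (prod_encode (i, 0))
      = (\<Sum>p\<in>insert (i, 0) ({i} \<times> {1..k i}). if snd p = 0 then -1 else 1)"
    by (simp only: sdeg_two_level)
  also have "\<dots> = -1 + (\<Sum>p\<in>{i} \<times> {1..k i}. if snd p = 0 then -1 else 1)"
    by (subst sum.insert) auto
  also have "\<dots> = -1 + (\<Sum>p\<in>{i} \<times> {1..k i}. 1)"
    by (intro arg_cong2[where f = "(+)"] sum.cong) auto
  finally show ?thesis by (simp add: card_cartesian_product)
qed

lemma sdeg_two_level_leaf:
  assumes "q \<in> two_level_pairs L n k" "snd q \<noteq> 0"
  shows "sdeg (two_level.edges L n k) two_level_sign (prod_encode q) = 1"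
proof -
  have "{p. p \<in> two_level_pairs L n k - {(0, 0)} \<and> (p = q \<or> pair_parent p = q)} = {q}"
    using assms unfolding pair_parent_def by (cases q) auto
  then show ?thesis using assms(2) by (simp add: sdeg_two_level)
qed

lemma two_level_realizes:
  assumes "1 \<le> L"
  shows "realizes (prod_encode ` two_level_pairs L n k) (two_level.edges L n k) two_level_sign
           (insert 1 (insert (int L - int n) ((\<lambda>i. int (k i) - 1) ` {1..n})))"
    (is "realizes _ _ _ ?D")
proof -
  let ?sdeg = "\<lambda>q. sdeg (two_level.edges L n k) two_level_sign (prod_encode q)"
  have "?sdeg q \<in> ?D" if q: "q \<in> two_level_pairs L n k" for q
  proof -
    consider "q = (0, 0)" | i where "i \<in> {1..n}" "q = (i, 0)" | "snd q \<noteq> 0"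
      using q unfolding two_level_pairs_def by (cases q) auto
    then show ?thesis
      by cases (simp_all add: sdeg_two_level_root sdeg_two_level_inner sdeg_two_level_leaf[OF q])
  qed
  moreover have "?D \<subseteq> ?sdeg ` two_level_pairs L n k"
  proof -
    have "(0, 1) \<in> two_level_pairs L n k" "(0, 0) \<in> two_level_pairs L n k"
      "\<And>i. i \<in> {1..n} \<Longrightarrow> (i, 0) \<in> two_level_pairs L n k"
      using assms unfolding two_level_pairs_def by auto
    then have "?sdeg (0, 1) \<in> ?sdeg ` two_level_pairs L n k"
      "?sdeg (0, 0) \<in> ?sdeg ` two_level_pairs L n k"
      "\<And>i. i \<in> {1..n} \<Longrightarrow> ?sdeg (i, 0) \<in> ?sdeg ` two_level_pairs L n k"
      by blast+
    then show ?thesis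
      using sdeg_two_level_root sdeg_two_level_inner sdeg_two_level_leaf[of "(0, 1)"]
        \<open>(0, 1) \<in> two_level_pairs L n k\<close> by auto
  qed
  ultimately show ?thesis unfolding realizes_def image_image by blast
qed

lemma pair_depth_eq_2: "pair_depth p = 2 \<longleftrightarrow> fst p \<noteq> 0 \<and> snd p \<noteq> 0"
  unfolding pair_depth_def by simp

lemma two_level_tree_diam:
  "tree_diam (prod_encode ` two_level_pairs L n k) (two_level.edges L n k)
     \<le> (if n = 0 then 2 else if n = 1 then 3 else 4)"
proof (rule tree_diam_le)
  show "finite (prod_encode ` two_level_pairs L n k)" "prod_encode ` two_level_pairs L n k \<noteq> {}"
    using two_level.finite_V two_level.root_in_V by blast+
next
  fix u v
  assume uv: "u \<in> prod_encode ` two_level_pairs L n k" "v \<in> prod_encode ` two_level_pairs L n k"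
  then obtain p q where pq: "p \<in> two_level_pairs L n k" "u = prod_encode p"
    "q \<in> two_level_pairs L n k" "v = prod_encode q" by blast
  have depth: "code_depth u \<le> (if n = 0 then 1 else 2)" "code_depth v \<le> (if n = 0 then 1 else 2)"
    using pq unfolding two_level_pairs_def code_depth_def pair_depth_def by auto
  have siblings: "gdist (two_level.edges L n k) u v \<le> 2"
    if "n = 1" "code_depth u = 2" "code_depth v = 2"
  proof -
    have "pair_depth p = 2" "pair_depth q = 2" using that pq by (simp_all add: code_depth_def)
    then have "fst p = 1" "snd p \<noteq> 0" "fst q = 1" "snd q \<noteq> 0"
      using pq(1,3) \<open>n = 1\<close> unfolding pair_depth_eq_2 two_level_pairs_def by auto
    then have par: "u \<noteq> prod_encode (0, 0)" "code_parent u = prod_encode (1, 0)"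
      "v \<noteq> prod_encode (0, 0)" "code_parent v = prod_encode (1, 0)"
      using pq unfolding code_parent_def pair_parent_def by auto
    then have "{u, prod_encode (1, 0)} \<in> two_level.edges L n k"
      "{v, prod_encode (1, 0)} \<in> two_level.edges L n k"
      using two_level.parent_edge[OF uv(1) par(1)] two_level.parent_edge[OF uv(2) par(3)] par(2,4)
      by simp_all
    then show ?thesis
      using gdist_le_walk[of "two_level.edges L n k" "[u, prod_encode (1, 0), v]" u v]
      by (simp add: is_walk_iff_walk_edges insert_commute)
  qed
  have "gdist (two_level.edges L n k) u v \<le> code_depth u + code_depth v"
    by (rule two_level.gdist_le_depth[OF uv])
  then show "gdist (two_level.edges L n k) u v \<le> (if n = 0 then 2 else if n = 1 then 3 else 4)"
    using depth siblings by (cases "n = 0"; cases "n = 1") (simp_all, presburger)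
qed

lemma tree_diam_lower_bound:
  fixes x :: "nat \<Rightarrow> int"
  assumes T: "is_tree V E" "realizes V E s D"
    and n: "n \<ge> 1" and inj: "inj_on x {1..n}" and gt: "\<forall>i\<in>{1..n}. x i > 1"
    and D: "D = insert 1 (x ` {1..n})"
  shows "(if n = 1 then 2 else if n = 2 then 3 else 4) \<le> tree_diam V E"
proof -
  have "x ` {1..n} \<subseteq> sdeg E s ` V" using T(2) D unfolding realizes_def by blast
  then have "\<forall>i\<in>{1..n}. \<exists>w\<in>V. sdeg E s w = x i" by (metis image_iff image_subset_iff)
  then obtain w where w: "\<And>i. i \<in> {1..n} \<Longrightarrow> w i \<in> V \<and> sdeg E s (w i) = x i" by metis
  have two: "has_two_neighbours E (w i)" if "i \<in> {1..n}" for i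
    using sdeg_ge_2_has_two_neighbours[of V E s "w i"] T(1) w[OF that] gt that
    unfolding is_tree_def by fastforce
  have distinct: "w i \<noteq> w j" if "i \<in> {1..n}" "j \<in> {1..n}" "i \<noteq> j" for i j
    using inj w that unfolding inj_on_def by metis
  consider "n = 1" | "n = 2" | "3 \<le> n" using n by linarith
  then show ?thesis
  proof cases
    case 1
    then show ?thesis using has_two_neighbours_tree_diam[OF T(1) two[of 1]] by simp
  next
    case 2
    then show ?thesis
      using has_two_neighbours_pair_tree_diam[OF T(1), of "w 1" "w 2"] w two distinct[of 1 2]
      by (simp split: if_splits)
  next
    case 3
    then show ?thesis
      using has_two_neighbours_triple_tree_diam[OF T(1), of "w 1" "w 2" "w 3"] w two
        distinct[of 1 2] distinct[of 1 3] distinct[of 2 3]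
      by simp
  qed
qed

lemma two_level_witness:
  assumes "1 \<le> L" "D = insert 1 (insert (int L - int m) ((\<lambda>i. int (k i) - 1) ` {1..m}))"
  shows "\<exists>V E s. is_tree V E \<and> realizes V E s D \<and>
           tree_diam V E \<le> (if m = 0 then 2 else if m = 1 then 3 else 4)"
  using two_level.is_tree two_level_realizes[OF assms(1)] two_level_tree_diam assms(2) by blast

lemma realizing_tree_exists:
  fixes x :: "nat \<Rightarrow> int"
  assumes n: "n \<ge> 1" and gt: "\<forall>i\<in>{1..n}. x i > 1" and D: "D = insert 1 (x ` {1..n})"
  shows "\<exists>V E s. is_tree V E \<and> realizes V E s D \<and>
           tree_diam V E \<le> (if n = 1 then 2 else if n = 2 then 3 else 4)"
proof -
  consider "n = 1" | "n = 2" | "3 \<le> n" using n by linarith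
  then show ?thesis
  proof cases
    case 1
    then show ?thesis using two_level_witness[of "nat (x 1)" D 0 id] gt D by simp
  next
    case 2
    then have "{1..n} = {1, 2}" by auto
    then show ?thesis
      using two_level_witness[of "nat (x 1) + 1" D 1 "\<lambda>_. nat (x 2) + 1"] 2 gt D by auto
  next
    case 3
    have "(\<lambda>i. int (nat (x i) + 1) - 1) ` {1..n} = x ` {1..n}"
      using gt by (intro image_cong) force+
    then have "D = insert 1 (insert (int (n + 1) - int n) ((\<lambda>i. int (nat (x i) + 1) - 1) ` {1..n}))"
      using D by simp
    then show ?thesis using two_level_witness[of "n + 1" D n "\<lambda>i. nat (x i) + 1"] 3 by simp
  qed
qed

lemma diamD_eqI:
  assumes "\<And>V E s. is_tree V E \<Longrightarrow> realizes V E s D \<Longrightarrow> b \<le> tree_diam V E"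
    and "is_tree V E" "realizes V E s D" "tree_diam V E \<le> b"
  shows "diamD D = b"
  unfolding diamD_def
proof (rule Least_equality)
  show "\<exists>V E s. is_tree V E \<and> realizes V E s D \<and> tree_diam V E = b"
    using assms by (metis le_antisym)
qed (use assms(1) in blast)

theorem mainTheorem2:
  fixes n :: nat and x :: "nat \<Rightarrow> int" and D :: "int set"
  assumes "n \<ge> 1"
    and "inj_on x {1..n}"
    and "\<forall>i\<in>{1..n}. x i > 1"
    and "D = insert 1 (x ` {1..n})"
  shows "diamD D = (if n = 1 then 2 else if n = 2 then 3 else 4)"
proof -
  obtain V E s where "is_tree V E" "realizes V E s D"
    "tree_diam V E \<le> (if n = 1 then 2 else if n = 2 then 3 else 4)"
    using realizing_tree_exists[OF assms(1,3,4)] by blast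
  then show ?thesis using diamD_eqI tree_diam_lower_bound[OF _ _ assms] by blast
qed

end
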